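(* Let $E\in M_n(\mathbb{FT})$ be idempotent. Then: (i) $E$ has the unique eigenvalue $0$, which is its maximum cycle mean, and the corresponding eigenspace is $C(E)$; (ii) $E_{i,i}=0$ if and only if $i$ is a node of the critical graph of $E$; (iii) the columns of $E$ with diagonal entry $0$ form a generating set for $C(E)$; (iv) every extremal point of $C(E)$ is, up to scaling, a column of $E$ with $0$ in the diagonal position; (v) the rows of $E$ with diagonal entry $0$ form a generating set for $R(E)$; (vi) every extremal point of $R(E)$ is, up to scaling, a row of $E$ with $0$ in the diagonal position; (vii) the rank of $E$ equals the number of strongly connected components of the critical graph of $E$; (viii) each strongly connected component of the critical graph of $E$ is a complete subgraph of $\Gamma_E$; (ix) if $i,j$ lie in the same strongly connected component of the critical graph, then the $i$th column of $E$ is a tropical multiple (real shift) of the $j$th column; (x) if $i,j$ lie in the same strongly connected component of the critical graph, then the $i$th row of $E$ is a tropical multiple of the $j$th row.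
   Context: $\mathbb{FT}$ is $\mathbb{R}$ with $a\oplus b=\max(a,b)$, $a\otimes b=a+b$; $M_n(\mathbb{FT})$ is the semigroup of real $n\times n$ matrices under $(A\otimes B)_{i,j}=\max_k(A_{i,k}+B_{k,j})$. A scalar $\lambda\in\mathbb{R}$ is an eigenvalue of $A$ if $A\otimes x=\lambda\otimes x$ for some $x\in\mathbb{R}^n$, where $(\lambda\otimes x)_i=\lambda+x_i$; the eigenspace is the set of all such $x$. $C(A)$, $R(A)\subseteq\mathbb{R}^n$ are the sets of finite componentwise maxima of real shifts of columns, resp. rows, of $A$ (submodules under componentwise max and shifts). A point $x$ of such a set $X$ is extremal if $X\setminus\{\lambda\otimes x:\lambda\in\mathbb{R}\}$ is closed under componentwise max and shifts. The rank of an idempotent $E$ is the minimal cardinality of a generating set of $C(E)$. $\Gamma_A$ is the complete weighted digraph on $\{1,\dots,n\}$ with edge $j\to i$ of weight $A_{i,j}$; the maximum cycle mean is the maximum arithmetic mean of edge weights over closed paths; the critical graph consists of all nodes and edges lying on closed paths whose mean equals the maximum cycle mean. *)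

theory Defs
  imports Complex_Main
begin

text \<open>Tropical (max-plus) matrices of size n x n are modelled as functions
  'n \<Rightarrow> 'n \<Rightarrow> real over a finite index type 'n (n = CARD('n)); vectors in R^n as
  'n \<Rightarrow> real.\<close>

type_synonym 'n tmat = "'n \<Rightarrow> 'n \<Rightarrow> real"
type_synonym 'n tvec = "'n \<Rightarrow> real"

definition tmul :: "('n::finite) tmat \<Rightarrow> 'n tmat \<Rightarrow> 'n tmat" where
  "tmul A B = (\<lambda>i j. Max (range (\<lambda>k. A i k + B k j)))"

definition tmulv :: "('n::finite) tmat \<Rightarrow> 'n tvec \<Rightarrow> 'n tvec" where
  "tmulv A x = (\<lambda>i. Max (range (\<lambda>k. A i k + x k)))"

definition tidempotent :: "('n::finite) tmat \<Rightarrow> bool" where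
  "tidempotent E \<longleftrightarrow> tmul E E = E"

definition tshift :: "real \<Rightarrow> 'n tvec \<Rightarrow> 'n tvec" where
  "tshift c x = (\<lambda>i. c + x i)"

definition teigenvalue :: "('n::finite) tmat \<Rightarrow> real \<Rightarrow> bool" where
  "teigenvalue A l \<longleftrightarrow> (\<exists>x. tmulv A x = tshift l x)"

definition teigenspace :: "('n::finite) tmat \<Rightarrow> real \<Rightarrow> 'n tvec set" where
  "teigenspace A l = {x. tmulv A x = tshift l x}"

definition tspan :: "'n tvec set \<Rightarrow> 'n tvec set" where
  "tspan S = {x. \<exists>F c. finite F \<and> F \<noteq> {} \<and> F \<subseteq> S \<and>
                        x = (\<lambda>i. Max ((\<lambda>v. c v + v i) ` F))}"

definition tcol :: "'n tmat \<Rightarrow> 'n \<Rightarrow> 'n tvec" where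
  "tcol A j = (\<lambda>i. A i j)"

definition trow :: "'n tmat \<Rightarrow> 'n \<Rightarrow> 'n tvec" where
  "trow A i = (\<lambda>j. A i j)"

definition colspace :: "'n tmat \<Rightarrow> 'n tvec set" where
  "colspace A = tspan (range (tcol A))"

definition rowspace :: "'n tmat \<Rightarrow> 'n tvec set" where
  "rowspace A = tspan (range (trow A))"

definition tclosed :: "'n tvec set \<Rightarrow> bool" where
  "tclosed X \<longleftrightarrow> (\<forall>x\<in>X. \<forall>y\<in>X. (\<lambda>i. max (x i) (y i)) \<in> X) \<and> (\<forall>x\<in>X. \<forall>c. tshift c x \<in> X)"

definition textremal :: "'n tvec \<Rightarrow> 'n tvec set \<Rightarrow> bool" where
  "textremal x X \<longleftrightarrow> x \<in> X \<and> tclosed (X - {tshift c x | c. True})"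

definition tgenerates :: "'n tvec set \<Rightarrow> 'n tvec set \<Rightarrow> bool" where
  "tgenerates G X \<longleftrightarrow> G \<subseteq> X \<and> tspan G = X"

definition trank :: "('n::finite) tmat \<Rightarrow> nat" where
  "trank E = (LEAST k. \<exists>G. finite G \<and> card G = k \<and> tgenerates G (colspace E))"

text \<open>Closed paths in Gamma_A: nonempty node lists p, with edges p!t \<rightarrow> p!((t+1) mod |p|);
  the edge j \<rightarrow> i has weight A i j.\<close>
definition cycle_weight :: "'n tmat \<Rightarrow> 'n list \<Rightarrow> real" where
  "cycle_weight A p = (\<Sum>t<length p. A (p ! ((t + 1) mod length p)) (p ! t))"

definition cycle_mean :: "'n tmat \<Rightarrow> 'n list \<Rightarrow> real" where
  "cycle_mean A p = cycle_weight A p / real (length p)"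

definition max_cycle_mean :: "'n tmat \<Rightarrow> real" where
  "max_cycle_mean A = Sup {cycle_mean A p | p. p \<noteq> []}"

definition critical_cycle :: "'n tmat \<Rightarrow> 'n list \<Rightarrow> bool" where
  "critical_cycle A p \<longleftrightarrow> p \<noteq> [] \<and> cycle_mean A p = max_cycle_mean A"

definition crit_node :: "'n tmat \<Rightarrow> 'n \<Rightarrow> bool" where
  "crit_node A i \<longleftrightarrow> (\<exists>p. critical_cycle A p \<and> i \<in> set p)"

definition crit_edge :: "'n tmat \<Rightarrow> 'n \<Rightarrow> 'n \<Rightarrow> bool" where
  "crit_edge A j i \<longleftrightarrow> (\<exists>p. critical_cycle A p \<and>
      (\<exists>t<length p. p ! t = j \<and> p ! ((t + 1) mod length p) = i))"

definition crit_same_scc :: "'n tmat \<Rightarrow> 'n \<Rightarrow> 'n \<Rightarrow> bool" where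
  "crit_same_scc A i j \<longleftrightarrow> crit_node A i \<and> crit_node A j \<and>
      (crit_edge A)\<^sup>*\<^sup>* i j \<and> (crit_edge A)\<^sup>*\<^sup>* j i"

definition crit_sccs :: "'n tmat \<Rightarrow> 'n set set" where
  "crit_sccs A = {{j. crit_same_scc A i j} | i. crit_node A i}"

end

theory Submission imports Defs begin

text \<open>Idempotency \<open>E = E \<otimes> E\<close> says two things about the entries: \<open>E\<^sub>i\<^sub>k + E\<^sub>k\<^sub>j \<le> E\<^sub>i\<^sub>j\<close>
  for every \<open>k\<close>, so all cycles of \<open>\<Gamma>\<^sub>E\<close> have nonpositive weight, and \<open>E\<^sub>i\<^sub>j = E\<^sub>i\<^sub>k + E\<^sub>k\<^sub>j\<close> for
  some \<open>k\<close>. Iterating the second along a chain of such \<open>k\<close> must repeat a node, which forces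
  every entry to factor through a node \<open>k\<close> with \<open>E\<^sub>k\<^sub>k = 0\<close>. Hence the maximum cycle mean is
  \<open>0\<close>, the critical nodes are those with zero diagonal, and \<open>i, j\<close> lie in one critical
  component iff \<open>E\<^sub>i\<^sub>j + E\<^sub>j\<^sub>i = 0\<close>, in which case column \<open>i\<close> is column \<open>j\<close> shifted by \<open>E\<^sub>j\<^sub>i\<close>.
  The column space is the set of fixed points of \<open>x \<mapsto> E \<otimes> x\<close>, and every fixed point is
  \<open>x\<^sub>i = max\<^sub>r (x\<^sub>r + E\<^sub>i\<^sub>r)\<close> with \<open>r\<close> ranging over one critical node per component. This
  yields generation by critical columns, the description of extremals and, since critical
  columns from distinct components are never shifts of each other, the rank. Rows follow by
  transposition.\<close>

lemma tmul_ge: "A i k + B k j \<le> tmul A B i j"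
  unfolding tmul_def by (rule Max_ge) auto

lemma tmul_attained: "\<exists>k. tmul A B i j = A i k + (B::('n::finite) tmat) k j"
proof -
  have "Max (range (\<lambda>k. A i k + B k j)) \<in> range (\<lambda>k. A i k + B k j)" by (rule Max_in) auto
  then show ?thesis unfolding tmul_def image_iff by blast
qed

lemma tmulv_ge: "A i k + x k \<le> tmulv A x i"
  unfolding tmulv_def by (rule Max_ge) auto

lemma tmulv_attained: "\<exists>k. tmulv A x i = A i k + (x::('n::finite) tvec) k"
proof -
  have "Max (range (\<lambda>k. A i k + x k)) \<in> range (\<lambda>k. A i k + x k)" by (rule Max_in) auto
  then show ?thesis unfolding tmulv_def image_iff by blast
qed

lemma tshift_0 [simp]: "tshift 0 x = x"
  by (simp add: tshift_def)

lemma tshift_eq_iff: "tshift a x = tshift b y \<longleftrightarrow> x = tshift (b - a) y"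
  by (auto simp: tshift_def fun_eq_iff algebra_simps)

lemma ex_tshift_eq_tshift_iff: "(\<exists>b. tshift a x = tshift b y) \<longleftrightarrow> (\<exists>b. x = tshift b y)"
  by (metis tshift_eq_iff add_diff_cancel_right')

lemma tmulv_tshift: "tmulv (A::('n::finite) tmat) (tshift c x) = tshift c (tmulv A x)"
proof (rule ext)
  fix i
  obtain k1 where k1: "tmulv A (tshift c x) i = A i k1 + tshift c x k1" using tmulv_attained by blast
  obtain k2 where k2: "tmulv A x i = A i k2 + x k2" using tmulv_attained by blast
  have "A i k1 + x k1 \<le> tmulv A x i" "A i k2 + tshift c x k2 \<le> tmulv A (tshift c x) i"
    by (rule tmulv_ge)+
  then show "tmulv A (tshift c x) i = tshift c (tmulv A x) i"
    using k1 k2 by (simp add: tshift_def)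
qed

lemma tspan_elim:
  assumes "x \<in> tspan G"
  obtains F c where "F \<subseteq> G" "\<And>v i. v \<in> F \<Longrightarrow> c v + v i \<le> x i" "\<And>i. \<exists>v\<in>F. x i = c v + v i"
proof -
  obtain F c where F: "finite F" "F \<noteq> {}" "F \<subseteq> G"
    and x: "x = (\<lambda>i. Max ((\<lambda>v. c v + v i) ` F))"
    using assms unfolding tspan_def by blast
  have "\<exists>v\<in>F. x i = c v + v i" for i
  proof -
    have "Max ((\<lambda>v. c v + v i) ` F) \<in> (\<lambda>v. c v + v i) ` F" using F by (intro Max_in) auto
    then show ?thesis unfolding x by auto
  qed
  moreover have "c v + v i \<le> x i" if "v \<in> F" for v i
    using F that unfolding x by (intro Max_ge) auto
  ultimately show ?thesis using that F by blast
qed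

text \<open>Combinations indexed by a finite set whose generators may repeat: coinciding
  generators are merged by taking the largest coefficient.\<close>
lemma tspan_indexed:
  assumes R: "finite R" "R \<noteq> {}" and h: "h ` R \<subseteq> G"
  shows "(\<lambda>i. Max ((\<lambda>r. a r + h r i) ` R)) \<in> tspan G"
proof -
  define c where "c v = Max (a ` {r\<in>R. h r = v})" for v
  have c_ge: "a r \<le> c (h r)" if "r \<in> R" for r
    unfolding c_def using R that by (intro Max_ge) auto
  have c_attained: "\<exists>r\<in>R. h r = v \<and> c v = a r" if "v \<in> h ` R" for v
  proof -
    have "c v \<in> a ` {r\<in>R. h r = v}" unfolding c_def using R that by (intro Max_in) auto
    then show ?thesis by auto
  qed
  have "Max ((\<lambda>r. a r + h r i) ` R) = Max ((\<lambda>v. c v + v i) ` h ` R)" for i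
  proof (rule antisym)
    show "Max ((\<lambda>r. a r + h r i) ` R) \<le> Max ((\<lambda>v. c v + v i) ` h ` R)"
    proof (rule Max.boundedI)
      fix y assume "y \<in> (\<lambda>r. a r + h r i) ` R"
      then obtain r where r: "r \<in> R" "y = a r + h r i" by blast
      have "c (h r) + h r i \<le> Max ((\<lambda>v. c v + v i) ` h ` R)" using R r by (intro Max_ge) auto
      then show "y \<le> Max ((\<lambda>v. c v + v i) ` h ` R)" using c_ge[OF r(1)] r by linarith
    qed (use R in auto)
    show "Max ((\<lambda>v. c v + v i) ` h ` R) \<le> Max ((\<lambda>r. a r + h r i) ` R)"
    proof (rule Max.boundedI)
      fix y assume "y \<in> (\<lambda>v. c v + v i) ` h ` R"
      then obtain v where v: "v \<in> h ` R" "y = c v + v i" by blast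
      then obtain r where "r \<in> R" "h r = v" "c v = a r" using c_attained by blast
      then show "y \<le> Max ((\<lambda>r. a r + h r i) ` R)" using R v by (intro Max_ge) auto
    qed (use R in auto)
  qed
  then show ?thesis unfolding tspan_def using R h by (intro CollectI exI[of _ "h ` R"] exI[of _ c]) auto
qed

lemma tspan_mono: "G \<subseteq> H \<Longrightarrow> tspan G \<subseteq> tspan H"
  unfolding tspan_def by blast

lemma tspan_fixed_points:
  assumes G: "\<And>v. v \<in> G \<Longrightarrow> tmulv (A::('n::finite) tmat) v = v" and x: "x \<in> tspan G"
  shows "tmulv A x = x"
proof -
  obtain F c where F: "F \<subseteq> G" and x_ge: "\<And>v i. v \<in> F \<Longrightarrow> c v + v i \<le> x i"
    and x_attained: "\<And>i. \<exists>v\<in>F. x i = c v + v i"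
    using tspan_elim[OF x] by blast
  have fixed: "tmulv A v i = v i" if "v \<in> F" for v i using G F that by auto
  show ?thesis
  proof (rule ext, rule antisym)
    fix i
    obtain k where k: "tmulv A x i = A i k + x k" using tmulv_attained by blast
    obtain v where v: "v \<in> F" "x k = c v + v k" using x_attained by blast
    have "A i k + v k \<le> v i" using tmulv_ge[of A i k v] fixed[OF v(1)] by simp
    then show "tmulv A x i \<le> x i" using k v x_ge[OF v(1), of i] by linarith
  next
    fix i
    obtain v where v: "v \<in> F" "x i = c v + v i" using x_attained by blast
    obtain k where k: "tmulv A v i = A i k + v k" using tmulv_attained by blast
    have "A i k + x k \<le> tmulv A x i" by (rule tmulv_ge)
    then show "x i \<le> tmulv A x i" using k fixed[OF v(1), of i] v x_ge[OF v(1), of k] by linarith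
  qed
qed

lemma max_closed_finite_Max:
  assumes "finite L" "L \<noteq> {}" "\<And>l. l \<in> L \<Longrightarrow> h l \<in> Y"
    and closed: "\<forall>a\<in>Y. \<forall>b\<in>Y. (\<lambda>i. max (a i) (b i)) \<in> Y"
  shows "(\<lambda>i. Max ((\<lambda>l. h l i) ` L)) \<in> Y"
  using assms(1-3)
proof (induction L rule: finite_ne_induct)
  case (insert l L)
  then show ?case using closed by simp
qed simp

lemma textremal_finite_Max:
  assumes "textremal x X" "finite L" "L \<noteq> {}" "h ` L \<subseteq> X"
    and x: "x = (\<lambda>i. Max ((\<lambda>l. h l i) ` L))"
  shows "\<exists>l\<in>L. \<exists>c. h l = tshift c x"
proof (rule ccontr)
  define Y where "Y = X - {tshift c x | c. True}"
  assume "\<not> ?thesis"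
  then have "h l \<in> Y" if "l \<in> L" for l using assms(4) that unfolding Y_def by blast
  moreover have "tclosed Y" using assms(1) by (simp add: textremal_def Y_def)
  ultimately have "x \<in> Y" unfolding x tclosed_def using assms(2,3) by (intro max_closed_finite_Max) auto
  moreover have "x = tshift 0 x" by simp
  ultimately show False unfolding Y_def by blast
qed

definition ttranspose :: "'n tmat \<Rightarrow> 'n tmat" where
  "ttranspose E = (\<lambda>i j. E j i)"

lemma tidempotent_ttranspose: "tidempotent (E::('n::finite) tmat) \<Longrightarrow> tidempotent (ttranspose E)"
  unfolding tidempotent_def tmul_def ttranspose_def fun_eq_iff by (simp add: add.commute)

lemma trow_eq_tcol_ttranspose: "trow E = tcol (ttranspose E)"
  by (simp add: trow_def tcol_def ttranspose_def fun_eq_iff)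

lemma rowspace_eq_colspace_ttranspose: "rowspace E = colspace (ttranspose E)"
  by (simp add: rowspace_def colspace_def trow_eq_tcol_ttranspose)

lemma ttranspose_diag [simp]: "ttranspose E j j = E j j"
  by (simp add: ttranspose_def)

lemma sum_rotate: "(\<Sum>s<L. g ((t + s) mod L)) = (\<Sum>s<(L::nat). (g::nat \<Rightarrow> 'a::comm_monoid_add) s)"
proof -
  have "inj_on (\<lambda>s. (t + s) mod L) {..<L}"
  proof (rule inj_onI)
    fix x y assume "x \<in> {..<L}" "y \<in> {..<L}" and eq: "(t + x) mod L = (t + y) mod L"
    have "int (t + x) mod int L = int (t + y) mod int L" using eq by (metis of_nat_mod)
    then have "(int t + int x - int t) mod int L = (int t + int y - int t) mod int L"
      by (intro mod_diff_cong) auto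
    then show "x = y" using \<open>x \<in> {..<L}\<close> \<open>y \<in> {..<L}\<close> by (simp add: zmod_int[symmetric])
  qed
  moreover have "(\<lambda>s. (t + s) mod L) ` {..<L} \<subseteq> {..<L}" by (cases "L = 0") auto
  ultimately have "bij_betw (\<lambda>s. (t + s) mod L) {..<L} {..<L}"
    by (simp add: bij_betw_def endo_inj_surj)
  then show ?thesis by (rule sum.reindex_bij_betw)
qed

lemma cycle_weight_rotate:
  "cycle_weight E p = (\<Sum>s<length p. E (p ! ((t + Suc s) mod length p)) (p ! ((t + s) mod length p)))"
proof -
  let ?L = "length p"
  define g where "g u = E (p ! ((u + 1) mod ?L)) (p ! u)" for u
  have "(\<Sum>s<?L. E (p ! ((t + Suc s) mod ?L)) (p ! ((t + s) mod ?L))) = (\<Sum>s<?L. g ((t + s) mod ?L))"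
    unfolding g_def by (intro sum.cong) (auto simp: mod_Suc_eq)
  also have "\<dots> = (\<Sum>s<?L. g s)" by (rule sum_rotate)
  finally show ?thesis unfolding cycle_weight_def g_def by simp
qed

subsection \<open>The critical graph of an idempotent matrix\<close>

locale tidempotent_matrix =
  fixes E :: "('n::finite) tmat"
  assumes idempotent: "tidempotent E"
begin

lemma entry_triangle: "E i k + E k j \<le> E i j"
  using tmul_ge[of E i k E j] idempotent by (simp add: tidempotent_def)

lemma entry_split: "\<exists>k. E i j = E i k + E k j"
  using tmul_attained[of E E i j] idempotent by (simp add: tidempotent_def)

lemma diag_nonpos: "E i i \<le> 0"
  using entry_triangle[of i i i] by simp

text \<open>Choose \<open>g 0 = i\<close> and \<open>g (u+1)\<close> splitting the entry \<open>E (g u) j\<close>. Then \<open>E (g s) j\<close>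
  splits through every later \<open>g u\<close>, and a repetition \<open>g s = g u\<close>, which finiteness forces,
  gives \<open>E (g u) (g u) = 0\<close>.\<close>
lemma entry_split_critical: "\<exists>k. E k k = 0 \<and> E i j = E i k + E k j"
proof -
  define f where "f k = (SOME k'. E k j = E k k' + E k' j)" for k
  have f: "E k j = E k (f k) + E (f k) j" for k
    unfolding f_def by (rule someI_ex) (rule entry_split)
  define g where "g u = (f ^^ u) i" for u
  have chain: "E (g s) j = E (g s) (g u) + E (g u) j" if "s < u" for s u
    using that
  proof (induction u)
    case (Suc u)
    have g_Suc: "g (Suc u) = f (g u)" by (simp add: g_def)
    show ?case
    proof (cases "s = u")
      case True
      then show ?thesis using f[of "g u"] g_Suc by simp
    next
      case False
      with Suc have IH: "E (g s) j = E (g s) (g u) + E (g u) j" by simp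
      have split: "E (g u) j = E (g u) (g (Suc u)) + E (g (Suc u)) j" using f[of "g u"] g_Suc by simp
      have "E (g s) (g u) + E (g u) (g (Suc u)) \<le> E (g s) (g (Suc u))"
        "E (g s) (g (Suc u)) + E (g (Suc u)) j \<le> E (g s) j" by (rule entry_triangle)+
      then show ?thesis using IH split by linarith
    qed
  qed simp
  have "\<not> inj g"
  proof
    assume "inj g"
    then have "finite (UNIV :: nat set)" using finite_imageD[of g UNIV] by simp
    then show False by simp
  qed
  then obtain s u where "g s = g u" "s \<noteq> u" unfolding inj_def by blast
  then obtain s u where "g s = g u" "s < u" by (metis linorder_neqE_nat)
  then have "E (g u) (g u) = 0" using chain[of s u] by simp
  moreover have "E i j = E i (g u) + E (g u) j" using chain[of 0 u] \<open>s < u\<close> by (simp add: g_def)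
  ultimately show ?thesis by blast
qed

lemma path_weight_le: "0 < m \<Longrightarrow> (\<Sum>s<m. E (q (Suc s)) (q s)) \<le> E (q m) (q 0)"
proof (induction m)
  case (Suc m)
  show ?case
  proof (cases "m = 0")
    case False
    with Suc have "(\<Sum>s<m. E (q (Suc s)) (q s)) \<le> E (q m) (q 0)" by simp
    moreover have "E (q (Suc m)) (q m) + E (q m) (q 0) \<le> E (q (Suc m)) (q 0)" by (rule entry_triangle)
    ultimately show ?thesis by simp
  qed simp
qed simp

lemma cycle_weight_le_diag:
  assumes "t < length p"
  shows "cycle_weight E p \<le> E (p ! t) (p ! t)"
proof -
  have "p \<noteq> []" using assms by (cases p) auto
  then show ?thesis using assms path_weight_le[of "length p" "\<lambda>s. p ! ((t + s) mod length p)"]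
    by (simp add: cycle_weight_rotate[of E p t])
qed

lemma cycle_weight_nonpos: "p \<noteq> [] \<Longrightarrow> cycle_weight E p \<le> 0"
  using cycle_weight_le_diag[of 0 p] diag_nonpos[of "p ! 0"] by simp

lemma max_cycle_mean_eq_0: "max_cycle_mean E = 0"
  unfolding max_cycle_mean_def
proof (rule cSup_eq_maximum)
  obtain k where "E k k = 0" using entry_split_critical by blast
  then show "0 \<in> {cycle_mean E p |p. p \<noteq> []}"
    by (auto simp: cycle_mean_def cycle_weight_def intro!: exI[of _ "[k]"])
  show "x \<le> 0" if "x \<in> {cycle_mean E p |p. p \<noteq> []}" for x
    using that cycle_weight_nonpos by (auto simp: cycle_mean_def divide_nonpos_nonneg)
qed

lemma critical_cycle_iff: "critical_cycle E p \<longleftrightarrow> p \<noteq> [] \<and> cycle_weight E p = 0"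
  unfolding critical_cycle_def max_cycle_mean_eq_0 cycle_mean_def by auto

lemma crit_node_iff: "crit_node E i \<longleftrightarrow> E i i = 0"
proof
  assume "crit_node E i"
  then obtain p t where "cycle_weight E p = 0" "t < length p" "p ! t = i"
    unfolding crit_node_def critical_cycle_iff in_set_conv_nth by blast
  then show "E i i = 0" using cycle_weight_le_diag[of t p] diag_nonpos[of i] by simp
next
  assume "E i i = 0"
  then show "crit_node E i" unfolding crit_node_def critical_cycle_iff
    by (intro exI[of _ "[i]"]) (simp add: cycle_weight_def)
qed

text \<open>A zero-weight cycle through the edge \<open>j \<rightarrow> i\<close> continues from \<open>i\<close> back to \<open>j\<close> with
  weight at most \<open>E\<^sub>j\<^sub>i\<close>.\<close>
lemma crit_edge_iff: "crit_edge E j i \<longleftrightarrow> E i j + E j i = 0"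
proof
  assume "crit_edge E j i"
  then obtain p t where p: "p \<noteq> []" "cycle_weight E p = 0" and t: "t < length p" "p ! t = j"
    "p ! ((t + 1) mod length p) = i"
    unfolding crit_edge_def critical_cycle_iff by blast
  obtain m where m: "length p = Suc m" using p by (cases p) auto
  define q where "q s = p ! ((t + s) mod length p)" for s
  have q: "q 0 = j" "q 1 = i" "q (Suc m) = j"
    unfolding q_def using t m mod_add_self2[of t "Suc m"] by simp_all
  have "0 = (\<Sum>s<Suc m. E (q (Suc s)) (q s))"
    using p(2) unfolding cycle_weight_rotate[of E p t] q_def m by simp
  also have "\<dots> = E i j + (\<Sum>s<m. E (q (Suc (Suc s))) (q (Suc s)))"
    unfolding sum.lessThan_Suc_shift using q by simp
  finally have weight: "0 = E i j + (\<Sum>s<m. E (q (Suc (Suc s))) (q (Suc s)))" .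
  show "E i j + E j i = 0"
  proof (cases "m = 0")
    case True
    then show ?thesis using weight q by simp
  next
    case False
    then have "(\<Sum>s<m. E (q (Suc (Suc s))) (q (Suc s))) \<le> E j i"
      using path_weight_le[of m "q \<circ> Suc"] q m by simp
    moreover have "E j i + E i j \<le> E j j" by (rule entry_triangle)
    ultimately show ?thesis using weight diag_nonpos[of j] by linarith
  qed
next
  assume "E i j + E j i = 0"
  then show "crit_edge E j i" unfolding crit_edge_def critical_cycle_iff
    by (intro exI[of _ "[j, i]"]) (auto simp: cycle_weight_def numeral_2_eq_2 intro!: exI[of _ 0])
qed

lemma zero_two_cycle_diag: "E i j + E j i = 0 \<Longrightarrow> E i i = 0"
  using entry_triangle[of i j i] diag_nonpos[of i] by simp

lemma zero_two_cycle_trans: "E a b + E b a = 0 \<Longrightarrow> E b c + E c b = 0 \<Longrightarrow> E a c + E c a = 0"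
  using entry_triangle[of a b c] entry_triangle[of c b a] entry_triangle[of a c a] diag_nonpos[of a]
  by linarith

lemma crit_same_scc_iff: "crit_same_scc E i j \<longleftrightarrow> E i j + E j i = 0"
proof
  have rtrancl: "E a b + E b a = 0" if "(crit_edge E)\<^sup>*\<^sup>* a b" "E a a = 0" for a b
    using that
  proof (induction rule: rtranclp_induct)
    case (step b c)
    then have "E b c + E c b = 0" using crit_edge_iff[of b c] by (simp add: add.commute)
    then show ?case using zero_two_cycle_trans[of a b c] step by blast
  qed simp
  assume "crit_same_scc E i j"
  then show "E i j + E j i = 0" unfolding crit_same_scc_def crit_node_iff using rtrancl by blast
next
  assume ij: "E i j + E j i = 0"
  then have ji: "E j i + E i j = 0" by simp
  have "crit_edge E j i" "crit_edge E i j" using ij ji by (simp_all add: crit_edge_iff)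
  moreover have "E i i = 0" "E j j = 0" using zero_two_cycle_diag ij ji by blast+
  ultimately show "crit_same_scc E i j" by (simp add: crit_same_scc_def crit_node_iff r_into_rtranclp)
qed

lemma crit_sccs_eq: "crit_sccs E = {{j. E i j + E j i = 0} | i. E i i = 0}"
  unfolding crit_sccs_def crit_same_scc_iff crit_node_iff ..

lemma crit_scc_eq_class:
  assumes "S \<in> crit_sccs E" "k \<in> S"
  shows "S = {j. E k j + E j k = 0}"
proof -
  obtain i where S: "S = {j. E i j + E j i = 0}" using assms(1) unfolding crit_sccs_eq by blast
  then have ki: "E k i + E i k = 0" using assms(2) by (simp add: add.commute)
  have "E i j + E j i = 0 \<longleftrightarrow> E k j + E j k = 0" for j
    using zero_two_cycle_trans[OF ki, of j] zero_two_cycle_trans[of i k j] ki by (auto simp: add.commute)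
  then show ?thesis unfolding S by simp
qed

lemma crit_scc_diag: "S \<in> crit_sccs E \<Longrightarrow> j \<in> S \<Longrightarrow> E j j = 0"
  unfolding crit_sccs_eq using zero_two_cycle_diag by (force simp: add.commute)

lemma crit_sccs_complete:
  assumes "S \<in> crit_sccs E" "i \<in> S" "j \<in> S"
  shows "crit_edge E j i"
proof -
  have "E i j + E j i = 0" using crit_scc_eq_class[OF assms(1,2)] assms(3) by simp
  then show ?thesis by (simp add: crit_edge_iff)
qed

lemma tcol_eq_tshift: "E i j + E j i = 0 \<Longrightarrow> tcol E i = tshift (E j i) (tcol E j)"
proof (rule ext)
  fix k assume "E i j + E j i = 0"
  moreover have "E k j + E j i \<le> E k i" "E k i + E i j \<le> E k j" by (rule entry_triangle)+
  ultimately show "tcol E i k = tshift (E j i) (tcol E j) k" by (simp add: tcol_def tshift_def)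
qed

lemma critical_tcol_tshift_iff:
  assumes "E i i = 0" "E j j = 0"
  shows "(\<exists>c. tcol E i = tshift c (tcol E j)) \<longleftrightarrow> E i j + E j i = 0"
proof
  assume "\<exists>c. tcol E i = tshift c (tcol E j)"
  then obtain c where "\<And>k. E k i = c + E k j" by (auto simp: tcol_def tshift_def fun_eq_iff)
  from this[of i] this[of j] show "E i j + E j i = 0" using assms by simp
qed (use tcol_eq_tshift in blast)

lemma trow_eq_tshift: "E i j + E j i = 0 \<Longrightarrow> trow E i = tshift (E i j) (trow E j)"
proof (rule ext)
  fix k assume "E i j + E j i = 0"
  moreover have "E i j + E j k \<le> E i k" "E j i + E i k \<le> E j k" by (rule entry_triangle)+
  ultimately show "trow E i k = tshift (E i j) (trow E j) k" by (simp add: trow_def tshift_def)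
qed

subsection \<open>The column space\<close>

lemma tmulv_tcol: "tmulv E (tcol E j) = tcol E j"
  using idempotent by (simp add: tidempotent_def tmulv_def tmul_def tcol_def fun_eq_iff)

lemma tmulv_tmulv: "tmulv E (tmulv E x) = tmulv E x"
proof -
  have "tmulv E x = (\<lambda>i. Max ((\<lambda>k. x k + tcol E k i) ` UNIV))"
    by (simp add: tmulv_def tcol_def add.commute)
  also have "\<dots> \<in> tspan (range (tcol E))" by (rule tspan_indexed) auto
  finally show ?thesis by (rule tspan_fixed_points[rotated]) (auto simp: tmulv_tcol)
qed

text \<open>The optimal path \<open>i \<leftarrow> k\<close> in \<open>x\<^sub>i = E\<^sub>i\<^sub>k + x\<^sub>k\<close> may be routed through a critical node \<open>l\<close>,
  and then through any \<open>r\<close> in the component of \<open>l\<close>, since \<open>E\<^sub>l\<^sub>r + E\<^sub>r\<^sub>l = 0\<close>.\<close>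
lemma fixed_point_expansion:
  assumes x: "tmulv E x = x" and cov: "\<And>l. E l l = 0 \<Longrightarrow> \<exists>r\<in>R. E l r + E r l = 0"
  shows "x i = Max ((\<lambda>r. x r + E i r) ` R)"
proof -
  have x_ge: "E i k + x k \<le> x i" for i k using tmulv_ge[of E i k x] x by simp
  obtain k where k: "x i = E i k + x k" using tmulv_attained[of E x i] x by auto
  obtain l where l: "E l l = 0" "E i k = E i l + E l k" using entry_split_critical by blast
  obtain r where r: "r \<in> R" "E l r + E r l = 0" using cov l(1) by blast
  have "E i l + E l r \<le> E i r" "E r l + x l \<le> x r" "E l k + x k \<le> x l"
    by (rule entry_triangle x_ge)+
  then have "x i = x r + E i r" using k l r x_ge[of i r] by linarith
  show ?thesis
  proof (rule Max_eqI[symmetric])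
    show "y \<le> x i" if "y \<in> (\<lambda>r. x r + E i r) ` R" for y using that x_ge by (auto simp: add.commute)
    show "x i \<in> (\<lambda>r. x r + E i r) ` R" using r(1) \<open>x i = x r + E i r\<close> by blast
  qed simp
qed

lemma fixed_point_in_tspan_tcol:
  assumes x: "tmulv E x = x" and cov: "\<And>l. E l l = 0 \<Longrightarrow> \<exists>r\<in>R. E l r + E r l = 0"
  shows "x \<in> tspan (tcol E ` R)"
proof -
  obtain l where "E l l = 0" using entry_split_critical by blast
  then have "R \<noteq> {}" using cov by blast
  then have "(\<lambda>i. Max ((\<lambda>r. x r + tcol E r i) ` R)) \<in> tspan (tcol E ` R)"
    by (intro tspan_indexed) auto
  moreover have "(\<lambda>i. Max ((\<lambda>r. x r + tcol E r i) ` R)) = x"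
    by (simp add: tcol_def fun_eq_iff fixed_point_expansion[OF x cov, symmetric])
  ultimately show ?thesis by simp
qed

lemma colspace_eq_fixed_points: "colspace E = {x. tmulv E x = x}"
proof
  show "colspace E \<subseteq> {x. tmulv E x = x}"
    unfolding colspace_def using tspan_fixed_points[of "range (tcol E)"] tmulv_tcol by blast
  have "x \<in> tspan (tcol E ` {r. E r r = 0})" if "tmulv E x = x" for x
    using that by (rule fixed_point_in_tspan_tcol) auto
  then show "{x. tmulv E x = x} \<subseteq> colspace E"
    unfolding colspace_def using tspan_mono[of "tcol E ` {r. E r r = 0}" "range (tcol E)"] by blast
qed

lemma tcol_in_colspace: "tcol E j \<in> colspace E"
  by (simp add: colspace_eq_fixed_points tmulv_tcol)

lemma tgenerates_tcol:
  assumes cov: "\<And>l. E l l = 0 \<Longrightarrow> \<exists>r\<in>R. E l r + E r l = 0"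
  shows "tgenerates (tcol E ` R) (colspace E)"
proof -
  have fixed: "tmulv E v = v" if "v \<in> tcol E ` R" for v
    using that tmulv_tcol by blast
  have "tspan (tcol E ` R) = {x. tmulv E x = x}"
  proof (intro equalityI subsetI CollectI)
    show "tmulv E x = x" if "x \<in> tspan (tcol E ` R)" for x
      using fixed that by (rule tspan_fixed_points)
    show "x \<in> tspan (tcol E ` R)" if "x \<in> {x. tmulv E x = x}" for x
      using that cov by (intro fixed_point_in_tspan_tcol) auto
  qed
  then show ?thesis unfolding tgenerates_def colspace_eq_fixed_points using fixed by blast
qed

lemma tgenerates_critical_tcols: "tgenerates {tcol E j | j. E j j = 0} (colspace E)"
proof -
  have "tgenerates (tcol E ` {r. E r r = 0}) (colspace E)" by (rule tgenerates_tcol) auto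
  moreover have "{tcol E j | j. E j j = 0} = tcol E ` {r. E r r = 0}" by blast
  ultimately show ?thesis by (simp only:)
qed

lemma teigenvalue_iff: "teigenvalue E l \<longleftrightarrow> l = 0"
proof
  assume "teigenvalue E l"
  then obtain x where x: "tmulv E x = tshift l x" unfolding teigenvalue_def by blast
  have "tshift l (tshift l x) = tshift l x"
    using tmulv_tmulv[of x] unfolding x tmulv_tshift .
  then show "l = 0" by (simp add: tshift_def fun_eq_iff)
next
  assume "l = 0"
  then show "teigenvalue E l"
    unfolding teigenvalue_def by (intro exI[of _ "tcol E undefined"]) (simp add: tmulv_tcol)
qed

lemma teigenspace_0: "teigenspace E 0 = colspace E"
  by (simp add: teigenspace_def colspace_eq_fixed_points)

lemma textremal_colspace:
  assumes extremal: "textremal x (colspace E)"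
  shows "\<exists>j c. E j j = 0 \<and> x = tshift c (tcol E j)"
proof -
  define C where "C = {r. E r r = 0}"
  define h where "h l = tshift (x l) (tcol E l)" for l
  have x: "tmulv E x = x" using extremal by (simp add: textremal_def colspace_eq_fixed_points)
  have cov: "\<exists>r\<in>C. E l r + E r l = 0" if "E l l = 0" for l using that by (auto simp: C_def)
  obtain k where "E k k = 0" using entry_split_critical by blast
  then have "C \<noteq> {}" by (auto simp: C_def)
  moreover have "h ` C \<subseteq> colspace E"
    unfolding h_def colspace_eq_fixed_points by (auto simp: tmulv_tshift tmulv_tcol)
  moreover have "x = (\<lambda>i. Max ((\<lambda>l. h l i) ` C))"
    by (simp add: h_def tshift_def tcol_def fun_eq_iff fixed_point_expansion[OF x cov, symmetric])
  ultimately obtain l c where l: "l \<in> C" and "h l = tshift c x"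
    using textremal_finite_Max[OF extremal finite] by blast
  then have "tshift c x = tshift (x l) (tcol E l)" by (simp add: h_def)
  then have "x = tshift (x l - c) (tcol E l)" by (simp only: tshift_eq_iff)
  then show ?thesis using l unfolding C_def by blast
qed

subsection \<open>Generating sets and rank\<close>

text \<open>A critical column cannot be a proper maximum of other elements of \<open>C(E)\<close>: the one
  attaining its zero diagonal entry already majorises, hence equals, a shift of it.\<close>
lemma tgenerates_contains_tshift_tcol:
  assumes G: "tgenerates G (colspace E)" and k: "E k k = 0"
  shows "\<exists>g\<in>G. \<exists>c. g = tshift c (tcol E k)"
proof -
  have "tcol E k \<in> tspan G" using G tcol_in_colspace unfolding tgenerates_def by simp
  then obtain F c where F: "F \<subseteq> G" and le: "\<And>v i. v \<in> F \<Longrightarrow> c v + v i \<le> E i k"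
    and attained: "\<And>i. \<exists>v\<in>F. E i k = c v + v i"
    by (rule tspan_elim) (auto simp: tcol_def)
  obtain v where v: "v \<in> F" "c v + v k = 0" using attained[of k] k by auto
  have "tmulv E v = v" using v(1) F G by (auto simp: tgenerates_def colspace_eq_fixed_points)
  then have ge: "E i k + v k \<le> v i" for i using tmulv_ge[of E i k v] by simp
  have "v i = - c v + E i k" for i using ge[of i] le[OF v(1), of i] v(2) by linarith
  then have "v = tshift (- c v) (tcol E k)" by (simp add: tshift_def tcol_def fun_eq_iff)
  then show ?thesis using v(1) F by blast
qed

lemma tgenerates_crit_scc_representatives:
  "\<exists>G. finite G \<and> card G = card (crit_sccs E) \<and> tgenerates G (colspace E)"
proof -
  define rep where "rep S = (SOME k. k \<in> S)" for S :: "'n set"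
  have rep: "rep S \<in> S" if S: "S \<in> crit_sccs E" for S
  proof -
    obtain k where "S = {j. E k j + E j k = 0}" "E k k = 0" using S unfolding crit_sccs_eq by blast
    then have "k \<in> S" by simp
    then show ?thesis unfolding rep_def by (rule someI)
  qed
  have cov: "\<exists>r\<in>rep ` crit_sccs E. E l r + E r l = 0" if "E l l = 0" for l
  proof -
    have S: "{j. E l j + E j l = 0} \<in> crit_sccs E" using that unfolding crit_sccs_eq by blast
    show ?thesis using rep[OF S] S by blast
  qed
  have inj: "inj_on (tcol E \<circ> rep) (crit_sccs E)"
  proof (rule inj_onI)
    fix S T assume S: "S \<in> crit_sccs E" and T: "T \<in> crit_sccs E"
      and "(tcol E \<circ> rep) S = (tcol E \<circ> rep) T"
    then have "\<exists>c. tcol E (rep S) = tshift c (tcol E (rep T))" by (intro exI[of _ 0]) simp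
    then have "E (rep S) (rep T) + E (rep T) (rep S) = 0"
      using critical_tcol_tshift_iff[OF crit_scc_diag[OF S rep[OF S]] crit_scc_diag[OF T rep[OF T]]]
      by (simp only:)
    then have "rep T \<in> S" by (subst crit_scc_eq_class[OF S rep[OF S]]) simp
    show "S = T"
      by (rule trans[OF crit_scc_eq_class[OF S \<open>rep T \<in> S\<close>] crit_scc_eq_class[OF T rep[OF T], symmetric]])
  qed
  have "card (tcol E ` rep ` crit_sccs E) = card (crit_sccs E)"
    using card_image[OF inj] unfolding image_comp .
  moreover have "finite (tcol E ` rep ` crit_sccs E)" by simp
  ultimately show ?thesis using tgenerates_tcol[OF cov] by blast
qed

text \<open>Each critical component is the set of indices of the critical columns that are shifts
  of one fixed element of \<open>G\<close>.\<close>
lemma card_crit_sccs_le_card_tgenerates: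
  assumes G: "finite G" "tgenerates G (colspace E)"
  shows "card (crit_sccs E) \<le> card G"
proof -
  define cls where "cls g = {j. E j j = 0 \<and> (\<exists>c. g = tshift c (tcol E j))}" for g
  have "crit_sccs E \<subseteq> cls ` G"
  proof
    fix S assume S: "S \<in> crit_sccs E"
    then obtain k where k: "E k k = 0" "S = {j. E k j + E j k = 0}" unfolding crit_sccs_eq by blast
    obtain g c where g: "g \<in> G" "g = tshift c (tcol E k)"
      using tgenerates_contains_tshift_tcol[OF G(2) k(1)] by blast
    have "cls g = {j. E j j = 0 \<and> E k j + E j k = 0}"
      unfolding cls_def g(2) ex_tshift_eq_tshift_iff
      by (simp add: critical_tcol_tshift_iff[OF k(1)] cong: conj_cong)
    also have "\<dots> = S" using crit_scc_diag[OF S] by (auto simp: k(2))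
    finally show "S \<in> cls ` G" using g(1) by blast
  qed
  then have "card (crit_sccs E) \<le> card (cls ` G)" using G(1) by (intro card_mono) auto
  also have "\<dots> \<le> card G" using G(1) by (rule card_image_le)
  finally show ?thesis .
qed

lemma trank_eq_card_crit_sccs: "trank E = card (crit_sccs E)"
  unfolding trank_def
  using tgenerates_crit_scc_representatives card_crit_sccs_le_card_tgenerates
  by (intro Least_equality) blast+

end

theorem corollary5p2:
  fixes E :: "('n::finite) tmat"
  assumes "tidempotent E"
  shows "((\<forall>l. teigenvalue E l \<longleftrightarrow> l = 0) \<and> max_cycle_mean E = 0 \<and> teigenspace E 0 = colspace E) \<and>
    (\<forall>i. E i i = 0 \<longleftrightarrow> crit_node E i) \<and>
    (tgenerates {tcol E j | j. E j j = 0} (colspace E)) \<and>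
    (\<forall>x. textremal x (colspace E) \<longrightarrow> (\<exists>j c. E j j = 0 \<and> x = tshift c (tcol E j))) \<and>
    (tgenerates {trow E i | i. E i i = 0} (rowspace E)) \<and>
    (\<forall>x. textremal x (rowspace E) \<longrightarrow> (\<exists>i c. E i i = 0 \<and> x = tshift c (trow E i))) \<and>
    (trank E = card (crit_sccs E)) \<and>
    (\<forall>S\<in>crit_sccs E. \<forall>i\<in>S. \<forall>j\<in>S. crit_edge E j i) \<and>
    (\<forall>i j. crit_same_scc E i j \<longrightarrow> (\<exists>c. tcol E i = tshift c (tcol E j))) \<and>
    (\<forall>i j. crit_same_scc E i j \<longrightarrow> (\<exists>c. trow E i = tshift c (trow E j)))"
proof -
  interpret E: tidempotent_matrix E by unfold_locales (rule assms)
  interpret Et: tidempotent_matrix "ttranspose E" by unfold_locales (rule tidempotent_ttranspose[OF assms])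
  have rows_generate: "tgenerates {trow E i | i. E i i = 0} (rowspace E)"
    using Et.tgenerates_critical_tcols
    unfolding trow_eq_tcol_ttranspose rowspace_eq_colspace_ttranspose ttranspose_diag .
  have rows_extremal: "\<exists>i c. E i i = 0 \<and> x = tshift c (trow E i)" if "textremal x (rowspace E)" for x
    using Et.textremal_colspace that
    unfolding trow_eq_tcol_ttranspose rowspace_eq_colspace_ttranspose ttranspose_diag .
  have cols_shift: "\<exists>c. tcol E i = tshift c (tcol E j)" if "crit_same_scc E i j" for i j
    using that E.tcol_eq_tshift unfolding E.crit_same_scc_iff by blast
  have rows_shift: "\<exists>c. trow E i = tshift c (trow E j)" if "crit_same_scc E i j" for i j
    using that E.trow_eq_tshift unfolding E.crit_same_scc_iff by blast
  show ?thesis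
    using E.teigenvalue_iff E.max_cycle_mean_eq_0 E.teigenspace_0 E.crit_node_iff
      E.tgenerates_critical_tcols E.textremal_colspace rows_generate rows_extremal
      E.trank_eq_card_crit_sccs E.crit_sccs_complete cols_shift rows_shift
    by (intro conjI allI impI ballI) simp_all
qed

end
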